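(* There is an absolute constant $C$ such that for every $g:\{0,1\}^n\to\{0,1\}$ and all $0<\delta<\epsilon<1/2$, $$\log\mathsf{qprt}_\delta(g)\le\frac{C}{(1/2-\epsilon)^2}\log\frac1\delta\cdot\log\mathsf{qprt}_\epsilon(g).$$
   Context: For $s\in\{0,1,\star\}^n$ the subcube with support $s$ is $\{x\in\{0,1\}^n: s_i\ne\star\Rightarrow x_i=s_i\}$, and for such a subcube $A$, $|A|$ is the number of $i$ with $s_i\in\{0,1\}$. $\mathsf{qprt}_\epsilon(g)$ is the optimal value of the LP: minimize $\sum_{z\in\{0,1\}}\sum_A w_{z,A}2^{|A|}$ over subcubes $A$, subject to $\sum_{A\ni x}w_{g(x),A}\ge1-\epsilon$ for all $x$; $\sum_{A\ni x}\sum_z w_{z,A}=1$ for all $x$; $w_{z,A}\ge0$. Logs base 2. *)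

theory Defs
  imports Complex_Main
begin

text \<open>Points of the Boolean cube are bool lists of length n; a subcube is given by
its support, a list of length n over bool option (None = star).\<close>

definition cube :: "nat \<Rightarrow> bool list set" where
  "cube n = {x. length x = n}"

definition supports :: "nat \<Rightarrow> bool option list set" where
  "supports n = {s. length s = n}"

definition in_subcube :: "bool list \<Rightarrow> bool option list \<Rightarrow> bool" where
  "in_subcube x s \<longleftrightarrow> length x = length s \<and>
     (\<forall>i < length s. s ! i \<noteq> None \<longrightarrow> x ! i = the (s ! i))"

definition codim :: "bool option list \<Rightarrow> nat" where
  "codim s = card {i. i < length s \<and> s ! i \<noteq> None}"

definition qprt_feasible ::
  "nat \<Rightarrow> (bool list \<Rightarrow> bool) \<Rightarrow> real \<Rightarrow> (bool \<Rightarrow> bool option list \<Rightarrow> real) \<Rightarrow> bool" where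
  "qprt_feasible n g \<epsilon> w \<longleftrightarrow>
     (\<forall>z s. w z s \<ge> 0) \<and>
     (\<forall>x \<in> cube n. (\<Sum>s\<in>{s\<in>supports n. in_subcube x s}. w (g x) s) \<ge> 1 - \<epsilon>) \<and>
     (\<forall>x \<in> cube n. (\<Sum>s\<in>{s\<in>supports n. in_subcube x s}. \<Sum>z\<in>UNIV. w z s) = 1)"

definition qprt_cost :: "nat \<Rightarrow> (bool \<Rightarrow> bool option list \<Rightarrow> real) \<Rightarrow> real" where
  "qprt_cost n w = (\<Sum>z\<in>UNIV. \<Sum>s\<in>supports n. w z s * 2 ^ codim s)"

text \<open>Optimal value of the LP (the LP is feasible and bounded below by 0, so the
infimum is attained).\<close>
definition qprt :: "nat \<Rightarrow> real \<Rightarrow> (bool list \<Rightarrow> bool) \<Rightarrow> real" where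
  "qprt n \<epsilon> g = Inf {qprt_cost n w | w. qprt_feasible n g \<epsilon> w}"

end

theory Submission imports Defs begin

text \<open>Amplification by majority vote. For a feasible $w$ of error $\epsilon$, the weights
$w_{z,A}$ with $A \ni x$ form a probability distribution on labelled subcubes containing $x$.
Draw $2m$ labelled subcubes independently and output their intersection, labelled by the
majority of the labels. Since the intersection contains $x$ exactly when every drawn subcube
does, seen from each point $x$ the labels are independent with error at most $\epsilon$, so a
Chernoff bound gives error at most $(4\epsilon(1-\epsilon))^m = (1 - 4(1/2-\epsilon)^2)^m \le \delta$
for $m \approx \ln(1/\delta)/(4(1/2-\epsilon)^2)$. Codimensions are subadditive under
intersection, so the cost of the new solution is at most the $2m$-th power of the cost of $w$.\<close>

section \<open>Intersecting subcubes\<close>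

definition subcube_inter :: "bool option list \<Rightarrow> bool option list \<Rightarrow> bool option list option" where
  "subcube_inter s1 s2 =
     (if length s1 = length s2 \<and> (\<forall>i<length s1. s1!i \<noteq> None \<longrightarrow> s2!i \<noteq> None \<longrightarrow> s1!i = s2!i)
      then Some (map2 (\<lambda>a b. if a = None then b else a) s1 s2) else None)"

lemma subcube_inter_SomeD:
  assumes "subcube_inter s1 s2 = Some s"
  shows "length s1 = length s2" "length s = length s1"
    and "\<And>i. i < length s \<Longrightarrow> s!i = (if s1!i = None then s2!i else s1!i)"
    and "\<And>i. i < length s1 \<Longrightarrow> s1!i \<noteq> None \<Longrightarrow> s2!i \<noteq> None \<Longrightarrow> s1!i = s2!i"
  using assms by (auto simp: subcube_inter_def split: if_splits)

lemma in_subcube_inter: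
  assumes "subcube_inter s1 s2 = Some s"
  shows "in_subcube x s \<longleftrightarrow> in_subcube x s1 \<and> in_subcube x s2"
proof -
  note len = subcube_inter_SomeD(1,2)[OF assms]
    and nth = subcube_inter_SomeD(3)[OF assms]
    and compat = subcube_inter_SomeD(4)[OF assms]
  have "(s!i \<noteq> None \<longrightarrow> x!i = the (s!i)) \<longleftrightarrow>
      (s1!i \<noteq> None \<longrightarrow> x!i = the (s1!i)) \<and> (s2!i \<noteq> None \<longrightarrow> x!i = the (s2!i))"
    if "i < length s" for i
    using that len nth[of i] compat[of i] by (cases "s1!i"; cases "s2!i") auto
  then show ?thesis
    using len by (simp add: in_subcube_def) blast
qed

lemma subcube_inter_defined:
  assumes "in_subcube x s1" "in_subcube x s2"
  shows "subcube_inter s1 s2 \<noteq> None"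
proof -
  have "s1!i = s2!i" if "i < length s1" "s1!i \<noteq> None" "s2!i \<noteq> None" for i
    using assms that by (auto simp: in_subcube_def option.expand)
  then show ?thesis
    using assms by (simp add: subcube_inter_def in_subcube_def)
qed

lemma codim_subcube_inter_le:
  assumes "subcube_inter s1 s2 = Some s"
  shows "codim s \<le> codim s1 + codim s2"
proof -
  note len = subcube_inter_SomeD(1,2)[OF assms] and nth = subcube_inter_SomeD(3)[OF assms]
  have "codim s \<le> card ({i. i < length s1 \<and> s1!i \<noteq> None} \<union> {i. i < length s2 \<and> s2!i \<noteq> None})"
    unfolding codim_def using len nth by (intro card_mono) auto
  also have "\<dots> \<le> codim s1 + codim s2"
    unfolding codim_def by (rule card_Un_le)
  finally show ?thesis .
qed

lemma in_subcube_map_Some: "in_subcube x (map Some y) \<longleftrightarrow> x = y"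
  by (auto simp: in_subcube_def intro: nth_equalityI)

lemma finite_supports: "finite (supports n)"
proof -
  have "supports n = {xs. set xs \<subseteq> UNIV \<and> length xs = n}"
    by (auto simp: supports_def)
  then show ?thesis
    using finite_lists_length_eq[of "UNIV :: bool option set" n] by simp
qed

lemma sum_supports_subcube_inter:
  assumes "s1 \<in> supports n"
  shows "(\<Sum>s\<in>supports n. of_bool (subcube_inter s1 s2 = Some s) * h s) =
         (case subcube_inter s1 s2 of None \<Rightarrow> 0 | Some s \<Rightarrow> (h s :: real))"
proof (cases "subcube_inter s1 s2")
  case (Some r)
  then have "r \<in> supports n"
    using assms subcube_inter_SomeD(2)[OF Some] by (simp add: supports_def)
  moreover have "(\<Sum>s\<in>supports n. of_bool (Some r = Some s) * h s) =
      (\<Sum>s\<in>supports n. if r = s then h s else 0)"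
    by (intro sum.cong) auto
  ultimately show ?thesis
    using Some finite_supports by simp
qed simp

definition mass :: "nat \<Rightarrow> (bool option list \<Rightarrow> real) \<Rightarrow> bool list \<Rightarrow> real" where
  "mass n a x = (\<Sum>s\<in>supports n. of_bool (in_subcube x s) * a s)"

definition weighted_size :: "nat \<Rightarrow> (bool option list \<Rightarrow> real) \<Rightarrow> real" where
  "weighted_size n a = (\<Sum>s\<in>supports n. a s * 2 ^ codim s)"

lemma sum_subcubes_containing_eq_mass:
  "(\<Sum>s\<in>{s\<in>supports n. in_subcube x s}. a s) = mass n a x"
  unfolding mass_def sum.inter_filter[OF finite_supports] by (intro sum.cong) auto

lemma mass_add: "mass n (\<lambda>s. a s + b s) x = mass n a x + mass n b x"
  by (simp add: mass_def distrib_left sum.distrib)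

lemma mass_nonneg: "(\<And>s. 0 \<le> a s) \<Longrightarrow> 0 \<le> mass n a x"
  unfolding mass_def by (intro sum_nonneg) simp

lemma mass_le_weighted_size:
  assumes "\<And>s. 0 \<le> a s"
  shows "mass n a x \<le> weighted_size n a"
  unfolding mass_def weighted_size_def
proof (rule sum_mono)
  fix s
  have "of_bool (in_subcube x s) \<le> (1::real)" and "(1::real) \<le> 2 ^ codim s"
    by simp_all
  then show "of_bool (in_subcube x s) * a s \<le> a s * 2 ^ codim s"
    using assms[of s] by (metis mult.commute mult_right_mono order_trans)
qed

lemma qprt_feasible_iff:
  "qprt_feasible n g \<epsilon> w \<longleftrightarrow>
     (\<forall>z s. 0 \<le> w z s) \<and>
     (\<forall>x\<in>cube n. 1 - \<epsilon> \<le> mass n (w (g x)) x) \<and>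
     (\<forall>x\<in>cube n. mass n (w False) x + mass n (w True) x = 1)"
  unfolding qprt_feasible_def sum_subcubes_containing_eq_mass
  by (simp add: UNIV_bool sum.distrib mass_add[symmetric])

lemma qprt_cost_eq: "qprt_cost n w = weighted_size n (\<lambda>s. w False s + w True s)"
  by (simp add: qprt_cost_def weighted_size_def UNIV_bool distrib_right sum.distrib)

section \<open>Convolution of weights\<close>

definition subcube_conv ::
  "nat \<Rightarrow> (bool option list \<Rightarrow> real) \<Rightarrow> (bool option list \<Rightarrow> real) \<Rightarrow> bool option list \<Rightarrow> real" where
  "subcube_conv n a b s =
     (\<Sum>s1\<in>supports n. \<Sum>s2\<in>supports n. a s1 * b s2 * of_bool (subcube_inter s1 s2 = Some s))"

lemma sum_swap_nested:
  "(\<Sum>a\<in>A. \<Sum>b\<in>B. \<Sum>c\<in>C. f a b c) = (\<Sum>b\<in>B. \<Sum>c\<in>C. \<Sum>a\<in>A. f a b c :: real)"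
  by (simp add: sum.swap[of _ A])

lemma subcube_conv_nonneg:
  "(\<And>s. 0 \<le> a s) \<Longrightarrow> (\<And>s. 0 \<le> b s) \<Longrightarrow> 0 \<le> subcube_conv n a b s"
  unfolding subcube_conv_def by (intro sum_nonneg) auto

lemma subcube_conv_sum_left:
  "subcube_conv n (\<lambda>s. \<Sum>c\<in>A. a c s) b s = (\<Sum>c\<in>A. subcube_conv n (a c) b s)"
  unfolding subcube_conv_def sum_distrib_right
  by (rule sum_swap_nested[symmetric])

lemma subcube_conv_add_right:
  "subcube_conv n a (\<lambda>s. b s + d s) s = subcube_conv n a b s + subcube_conv n a d s"
  unfolding subcube_conv_def by (simp add: algebra_simps sum.distrib)

lemma mass_subcube_conv: "mass n (subcube_conv n a b) x = mass n a x * mass n b x"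
proof -
  have inter: "(\<Sum>s\<in>supports n. of_bool (subcube_inter s1 s2 = Some s) * of_bool (in_subcube x s)) =
      (of_bool (in_subcube x s1 \<and> in_subcube x s2) :: real)" if "s1 \<in> supports n" for s1 s2
    using sum_supports_subcube_inter[OF that] subcube_inter_defined[of x s1 s2]
    by (auto simp: in_subcube_inter split: option.split)
  have "mass n (subcube_conv n a b) x =
      (\<Sum>s1\<in>supports n. \<Sum>s2\<in>supports n. \<Sum>s\<in>supports n.
         a s1 * b s2 * (of_bool (subcube_inter s1 s2 = Some s) * of_bool (in_subcube x s)))"
    unfolding mass_def subcube_conv_def sum_distrib_left
    by (subst sum_swap_nested) (simp add: mult_ac)
  also have "\<dots> = (\<Sum>s1\<in>supports n. \<Sum>s2\<in>supports n.
      a s1 * b s2 * of_bool (in_subcube x s1 \<and> in_subcube x s2))"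
    by (intro sum.cong refl) (simp only: sum_distrib_left[symmetric] inter)
  also have "\<dots> = mass n a x * mass n b x"
    unfolding mass_def sum_product by (simp add: of_bool_conj mult_ac)
  finally show ?thesis .
qed

lemma weighted_size_subcube_conv_le:
  assumes a: "\<And>s. 0 \<le> a s" and b: "\<And>s. 0 \<le> b s"
  shows "weighted_size n (subcube_conv n a b) \<le> weighted_size n a * weighted_size n b"
proof -
  have inter: "(\<Sum>s\<in>supports n. of_bool (subcube_inter s1 s2 = Some s) * 2 ^ codim s)
      \<le> (2 ^ (codim s1 + codim s2) :: real)" if "s1 \<in> supports n" for s1 s2
    using sum_supports_subcube_inter[OF that] codim_subcube_inter_le[of s1 s2]
    by (auto split: option.split)
  have "weighted_size n (subcube_conv n a b) =
      (\<Sum>s1\<in>supports n. \<Sum>s2\<in>supports n. \<Sum>s\<in>supports n.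
         a s1 * b s2 * (of_bool (subcube_inter s1 s2 = Some s) * 2 ^ codim s))"
    unfolding weighted_size_def subcube_conv_def sum_distrib_right
    by (subst sum_swap_nested) (simp add: mult_ac)
  also have "\<dots> \<le> (\<Sum>s1\<in>supports n. \<Sum>s2\<in>supports n. a s1 * b s2 * 2 ^ (codim s1 + codim s2))"
    using a b inter by (intro sum_mono) (simp add: sum_distrib_left[symmetric] mult_left_mono)
  also have "\<dots> = weighted_size n a * weighted_size n b"
    unfolding weighted_size_def sum_product by (simp add: power_add mult_ac)
  finally show ?thesis .
qed

primrec subcube_conv_power ::
  "nat \<Rightarrow> (bool option list \<Rightarrow> real) \<Rightarrow> nat \<Rightarrow> bool option list \<Rightarrow> real" where
  "subcube_conv_power n a 0 s = of_bool (s = replicate n None)"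
| "subcube_conv_power n a (Suc k) s = subcube_conv n (subcube_conv_power n a k) a s"

lemma subcube_conv_power_nonneg:
  "(\<And>s. 0 \<le> a s) \<Longrightarrow> 0 \<le> subcube_conv_power n a k s"
  by (induction k arbitrary: s) (simp_all add: subcube_conv_nonneg)

lemma weighted_size_subcube_conv_power_le:
  assumes a: "\<And>s. 0 \<le> a s"
  shows "weighted_size n (subcube_conv_power n a k) \<le> weighted_size n a ^ k"
proof (induction k)
  case 0
  have "(\<Sum>s\<in>supports n. of_bool (s = replicate n None) * 2 ^ codim s) =
      (\<Sum>s\<in>supports n. if s = replicate n None then 1 else (0::real))"
    by (intro sum.cong) (simp_all add: codim_def cong: conj_cong)
  moreover have "replicate n None \<in> supports n" by (simp add: supports_def)
  ultimately show ?case
    using finite_supports by (simp add: weighted_size_def)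
next
  case (Suc k)
  have "subcube_conv_power n a (Suc k) = subcube_conv n (subcube_conv_power n a k) a"
    by (simp add: fun_eq_iff)
  then have "weighted_size n (subcube_conv_power n a (Suc k)) \<le>
      weighted_size n (subcube_conv_power n a k) * weighted_size n a"
    using weighted_size_subcube_conv_le subcube_conv_power_nonneg a by simp
  also have "\<dots> \<le> weighted_size n a ^ k * weighted_size n a"
    using Suc.IH a by (intro mult_right_mono) (auto simp: weighted_size_def intro: sum_nonneg)
  finally show ?case by (metis mult.commute power_Suc)
qed

section \<open>Majority vote over independent draws\<close>

text \<open>The weight of drawing $k$ labelled subcubes from $w$ with intersection $s$ and exactly $c$
labels True (unnormalised: the distributions are those seen from the points of $s$).\<close>
primrec vote_weight ::
  "nat \<Rightarrow> (bool \<Rightarrow> bool option list \<Rightarrow> real) \<Rightarrow> nat \<Rightarrow> nat \<Rightarrow> bool option list \<Rightarrow> real" where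
  "vote_weight n w 0 c s = of_bool (c = 0 \<and> s = replicate n None)"
| "vote_weight n w (Suc k) c s =
     subcube_conv n (vote_weight n w k c) (w False) s +
     (case c of 0 \<Rightarrow> 0 | Suc c' \<Rightarrow> subcube_conv n (vote_weight n w k c') (w True) s)"

lemma vote_weight_nonneg:
  assumes "\<And>z s. 0 \<le> w z s"
  shows "0 \<le> vote_weight n w k c s"
proof (induction k arbitrary: c s)
  case (Suc k)
  then show ?case
    using assms by (cases c) (auto intro!: add_nonneg_nonneg subcube_conv_nonneg)
qed simp

lemma vote_weight_eq_0: "k < c \<Longrightarrow> vote_weight n w k c = (\<lambda>_. 0)"
proof (induction k arbitrary: c)
  case (Suc k)
  then obtain c' where "c = Suc c'" "k < c'" by (cases c) auto
  with Suc.IH show ?case by (simp add: subcube_conv_def)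
qed auto

lemma sum_vote_weight:
  "(\<Sum>c\<le>k. vote_weight n w k c s) = subcube_conv_power n (\<lambda>s. w False s + w True s) k s"
proof (induction k arbitrary: s)
  case (Suc k)
  have "(\<Sum>c\<le>Suc k. vote_weight n w (Suc k) c s) =
      (\<Sum>c\<le>Suc k. subcube_conv n (vote_weight n w k c) (w False) s) +
      (\<Sum>c\<le>Suc k. case c of 0 \<Rightarrow> 0 | Suc c' \<Rightarrow> subcube_conv n (vote_weight n w k c') (w True) s)"
    by (simp only: vote_weight.simps sum.distrib)
  also have "(\<Sum>c\<le>Suc k. subcube_conv n (vote_weight n w k c) (w False) s) =
      (\<Sum>c\<le>k. subcube_conv n (vote_weight n w k c) (w False) s)"
    by (simp add: vote_weight_eq_0 subcube_conv_def)
  also have "(\<Sum>c\<le>Suc k. case c of 0 \<Rightarrow> 0 | Suc c' \<Rightarrow> subcube_conv n (vote_weight n w k c') (w True) s) =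
      (\<Sum>c\<le>k. subcube_conv n (vote_weight n w k c) (w True) s)"
    by (subst sum.atMost_Suc_shift) simp
  also have "(\<Sum>c\<le>k. subcube_conv n (vote_weight n w k c) (w False) s) +
      (\<Sum>c\<le>k. subcube_conv n (vote_weight n w k c) (w True) s) =
      subcube_conv n (\<lambda>s. \<Sum>c\<le>k. vote_weight n w k c s) (\<lambda>s. w False s + w True s) s"
    by (simp add: subcube_conv_add_right subcube_conv_sum_left)
  finally show ?case using Suc.IH by simp
qed simp

lemma mass_vote_weight_Suc:
  "mass n (vote_weight n w (Suc k) c) x =
     mass n (vote_weight n w k c) x * mass n (w False) x +
     (case c of 0 \<Rightarrow> 0 | Suc c' \<Rightarrow> mass n (vote_weight n w k c') x * mass n (w True) x)"
proof -
  have "vote_weight n w (Suc k) c = (\<lambda>s. subcube_conv n (vote_weight n w k c) (w False) s +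
      (case c of 0 \<Rightarrow> 0 | Suc c' \<Rightarrow> subcube_conv n (vote_weight n w k c') (w True) s))"
    by (rule ext) simp
  then show ?thesis
    by (cases c) (simp_all add: mass_add mass_subcube_conv)
qed

lemma mass_vote_weight_generating:
  assumes "x \<in> cube n"
  shows "(\<Sum>c\<le>k. mass n (vote_weight n w k c) x * r ^ c) =
         (mass n (w False) x + r * mass n (w True) x) ^ k"
proof (induction k)
  case 0
  have "in_subcube x (replicate n None)"
    using assms by (simp add: cube_def in_subcube_def)
  then have "mass n (vote_weight n w 0 0) x =
      (\<Sum>s\<in>supports n. if s = replicate n None then 1 else 0)"
    unfolding mass_def by (intro sum.cong) auto
  also have "\<dots> = 1"
    using finite_supports by (simp add: supports_def)
  finally show ?case by (simp del: vote_weight.simps)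
next
  case (Suc k)
  let ?f = "\<lambda>c. mass n (vote_weight n w k c) x"
  have "(\<Sum>c\<le>Suc k. mass n (vote_weight n w (Suc k) c) x * r ^ c) =
      (\<Sum>c\<le>Suc k. ?f c * mass n (w False) x * r ^ c) +
      (\<Sum>c\<le>Suc k. (case c of 0 \<Rightarrow> 0 | Suc c' \<Rightarrow> ?f c' * mass n (w True) x) * r ^ c)"
    by (simp only: mass_vote_weight_Suc distrib_right sum.distrib)
  also have "(\<Sum>c\<le>Suc k. ?f c * mass n (w False) x * r ^ c) =
      mass n (w False) x * (\<Sum>c\<le>k. ?f c * r ^ c)"
    by (simp add: vote_weight_eq_0 mass_def sum_distrib_left mult_ac)
  also have "(\<Sum>c\<le>Suc k. (case c of 0 \<Rightarrow> 0 | Suc c' \<Rightarrow> ?f c' * mass n (w True) x) * r ^ c) =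
      r * mass n (w True) x * (\<Sum>c\<le>k. ?f c * r ^ c)"
    by (subst sum.atMost_Suc_shift) (simp add: sum_distrib_left mult_ac)
  finally show ?case using Suc.IH by (simp add: algebra_simps)
qed

section \<open>Chernoff bounds for the vote count\<close>

lemma sum_le_exponential_moment:
  fixes f :: "nat \<Rightarrow> real"
  assumes f: "\<And>c. 0 \<le> f c" and s: "0 < s" and A: "A \<subseteq> {..k}"
    and exceed: "\<And>c. c \<in> A \<Longrightarrow> s ^ j \<le> s ^ c"
  shows "(\<Sum>c\<in>A. f c) \<le> (\<Sum>c\<le>k. f c * s ^ c) / s ^ j"
proof -
  have "(\<Sum>c\<in>A. f c) \<le> (\<Sum>c\<in>A. f c * s ^ c / s ^ j)"
  proof (rule sum_mono)
    fix c assume "c \<in> A"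
    then have "f c * 1 \<le> f c * (s ^ c / s ^ j)"
      using f exceed s by (intro mult_left_mono) simp_all
    then show "f c \<le> f c * s ^ c / s ^ j" by simp
  qed
  also have "\<dots> \<le> (\<Sum>c\<le>k. f c * s ^ c / s ^ j)"
    using A f s by (intro sum_mono2) simp_all
  finally show ?thesis by (simp add: sum_divide_distrib)
qed

text \<open>$(1-e)/e$ is the base minimising the exponential moment bound at $q = e$.\<close>
lemma chernoff_base_le:
  fixes e q :: real
  assumes e: "0 < e" "e < 1/2" and q: "0 \<le> q" "q \<le> e"
  shows "((1 - q) + (1 - e) / e * q)\<^sup>2 / ((1 - e) / e) \<le> 4 * e * (1 - e)"
proof -
  define t where "t = (1 - e) / e"
  have t: "0 < t" "t - 1 = (1 - 2 * e) / e"
    using e by (simp_all add: t_def field_simps)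
  have "(1 - q) + t * q = 1 + (t - 1) * q" by (simp add: algebra_simps)
  also have "\<dots> \<le> 1 + (t - 1) * e"
    using t e q by (intro add_left_mono mult_left_mono) simp_all
  also have "\<dots> = 2 * (1 - e)"
    using e by (simp add: t field_simps)
  finally have "((1 - q) + t * q)\<^sup>2 \<le> (2 * (1 - e))\<^sup>2"
    using t q e by (intro power_mono) (simp_all add: add_nonneg_nonneg)
  then have "((1 - q) + t * q)\<^sup>2 / t \<le> (2 * (1 - e))\<^sup>2 / t"
    using t by (simp add: divide_right_mono)
  also have "\<dots> = 4 * e * (1 - e)"
    using e by (simp add: t_def field_simps power2_eq_square)
  finally show ?thesis by (simp add: t_def)
qed

lemma binomial_upper_tail_le:
  fixes f :: "nat \<Rightarrow> real"
  assumes f: "\<And>c. 0 \<le> f c"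
    and generating: "\<And>r. (\<Sum>c\<le>2*m. f c * r ^ c) = ((1 - q) + r * q) ^ (2*m)"
    and e: "0 < e" "e < 1/2" and q: "0 \<le> q" "q \<le> e"
  shows "(\<Sum>c\<in>{m<..2*m}. f c) \<le> (4 * e * (1 - e)) ^ m"
proof -
  define t where "t = (1 - e) / e"
  have t: "0 < t" "1 \<le> t"
    using e by (simp_all add: t_def field_simps)
  have "(\<Sum>c\<in>{m<..2*m}. f c) \<le> (\<Sum>c\<le>2*m. f c * t ^ c) / t ^ m"
    using f t by (intro sum_le_exponential_moment power_increasing) auto
  also have "\<dots> = (((1 - q) + t * q)\<^sup>2 / t) ^ m"
    unfolding generating by (simp only: power_mult power_divide)
  also have "\<dots> \<le> (4 * e * (1 - e)) ^ m"
    using chernoff_base_le[OF e q] t q e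
    by (intro power_mono) (simp_all add: t_def add_nonneg_nonneg)
  finally show ?thesis .
qed

lemma binomial_lower_tail_le:
  fixes f :: "nat \<Rightarrow> real"
  assumes f: "\<And>c. 0 \<le> f c"
    and generating: "\<And>r. (\<Sum>c\<le>2*m. f c * r ^ c) = (p + r * (1 - p)) ^ (2*m)"
    and e: "0 < e" "e < 1/2" and p: "0 \<le> p" "p \<le> e"
  shows "(\<Sum>c\<le>m. f c) \<le> (4 * e * (1 - e)) ^ m"
proof -
  define t where "t = (1 - e) / e"
  have t: "0 < t" "1 \<le> t"
    using e by (simp_all add: t_def field_simps)
  have base: "(p + 1 / t * (1 - p))\<^sup>2 / (1 / t) = ((1 - p) + t * p)\<^sup>2 / t"
    using t by (simp add: field_simps power2_eq_square)
  have "(\<Sum>c\<le>m. f c) \<le> (\<Sum>c\<le>2*m. f c * (1 / t) ^ c) / (1 / t) ^ m"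
    using f t by (intro sum_le_exponential_moment power_decreasing) auto
  also have "\<dots> = (((1 - p) + t * p)\<^sup>2 / t) ^ m"
    unfolding generating base[symmetric] by (simp only: power_mult power_divide)
  also have "\<dots> \<le> (4 * e * (1 - e)) ^ m"
    using chernoff_base_le[OF e p] t p e
    by (intro power_mono) (simp_all add: t_def add_nonneg_nonneg)
  finally show ?thesis .
qed

definition majority_vote ::
  "nat \<Rightarrow> (bool \<Rightarrow> bool option list \<Rightarrow> real) \<Rightarrow> nat \<Rightarrow> bool \<Rightarrow> bool option list \<Rightarrow> real" where
  "majority_vote n w m z s =
     (\<Sum>c \<in> (if z then {m<..2*m} else {..m}). vote_weight n w (2*m) c s)"

lemma sum_atMost_double_split:
  fixes f :: "nat \<Rightarrow> real"
  shows "(\<Sum>c\<le>2*m. f c) = (\<Sum>c\<le>m. f c) + (\<Sum>c\<in>{m<..2*m}. f c)"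
proof -
  have "{..2*m} = {..m} \<union> {m<..2*m}" "{..m} \<inter> {m<..2*m} = {}" by auto
  then show ?thesis by (simp add: sum.union_disjoint)
qed

lemma majority_vote_total:
  "majority_vote n w m False s + majority_vote n w m True s =
     subcube_conv_power n (\<lambda>s. w False s + w True s) (2*m) s"
  unfolding majority_vote_def by (simp add: sum_atMost_double_split[symmetric] sum_vote_weight)

lemma mass_majority_vote:
  "mass n (majority_vote n w m z) x =
     (\<Sum>c \<in> (if z then {m<..2*m} else {..m}). mass n (vote_weight n w (2*m) c) x)"
  unfolding majority_vote_def mass_def sum_distrib_left by (rule sum.swap)

lemma majority_vote_feasible:
  assumes feasible: "qprt_feasible n g e w" and e: "0 < e" "e < 1/2"
    and err: "(4 * e * (1 - e)) ^ m \<le> d"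
  shows "qprt_feasible n g d (majority_vote n w m)"
proof -
  have nonneg: "\<And>z s. 0 \<le> w z s"
    and correct: "\<And>x. x \<in> cube n \<Longrightarrow> 1 - e \<le> mass n (w (g x)) x"
    and total: "\<And>x. x \<in> cube n \<Longrightarrow> mass n (w False) x + mass n (w True) x = 1"
    using feasible by (auto simp: qprt_feasible_iff)
  have votes_nonneg: "0 \<le> vote_weight n w (2*m) c s" for c s
    using vote_weight_nonneg[OF nonneg] .
  have counts_nonneg: "0 \<le> mass n (vote_weight n w (2*m) c) x" for c x
    using votes_nonneg by (rule mass_nonneg)
  have majority_total:
    "mass n (majority_vote n w m False) x + mass n (majority_vote n w m True) x = 1"
    if x: "x \<in> cube n" for x
    using mass_vote_weight_generating[OF x, of w "2*m" 1] total[OF x]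
    by (simp add: mass_majority_vote sum_atMost_double_split)
  have majority_error: "mass n (majority_vote n w m (\<not> g x)) x \<le> d" if x: "x \<in> cube n" for x
  proof (cases "g x")
    case True
    with correct[OF x] total[OF x]
    have "mass n (w False) x \<le> e" "mass n (w True) x = 1 - mass n (w False) x" by auto
    then have "(\<Sum>c\<le>m. mass n (vote_weight n w (2*m) c) x) \<le> (4 * e * (1 - e)) ^ m"
      using mass_vote_weight_generating[OF x] mass_nonneg[OF nonneg]
      by (intro binomial_lower_tail_le[OF counts_nonneg _ e]) auto
    with True err show ?thesis by (simp add: mass_majority_vote)
  next
    case False
    with correct[OF x] total[OF x]
    have "mass n (w True) x \<le> e" "mass n (w False) x = 1 - mass n (w True) x" by auto
    then have "(\<Sum>c\<in>{m<..2*m}. mass n (vote_weight n w (2*m) c) x) \<le> (4 * e * (1 - e)) ^ m"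
      using mass_vote_weight_generating[OF x] mass_nonneg[OF nonneg]
      by (intro binomial_upper_tail_le[OF counts_nonneg _ e]) auto
    with False err show ?thesis by (simp add: mass_majority_vote)
  qed
  have "1 - d \<le> mass n (majority_vote n w m (g x)) x" if "x \<in> cube n" for x
    using majority_total[OF that] majority_error[OF that] by (cases "g x") auto
  moreover have "0 \<le> majority_vote n w m z s" for z s
    unfolding majority_vote_def using votes_nonneg by (intro sum_nonneg) auto
  ultimately show ?thesis
    using majority_total by (simp add: qprt_feasible_iff)
qed

lemma qprt_cost_majority_vote_le:
  assumes "\<And>z s. 0 \<le> w z s"
  shows "qprt_cost n (majority_vote n w m) \<le> qprt_cost n w ^ (2*m)"
  unfolding qprt_cost_eq majority_vote_total
  using assms by (intro weighted_size_subcube_conv_power_le) (simp add: add_nonneg_nonneg)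

definition point_cover :: "nat \<Rightarrow> (bool list \<Rightarrow> bool) \<Rightarrow> bool \<Rightarrow> bool option list \<Rightarrow> real" where
  "point_cover n g z s = of_bool (\<exists>y\<in>cube n. s = map Some y \<and> z = g y)"

lemma mass_point_cover:
  assumes "x \<in> cube n"
  shows "mass n (point_cover n g z) x = of_bool (z = g x)"
proof -
  have "mass n (point_cover n g z) x =
      (\<Sum>s\<in>supports n. if s = map Some x then of_bool (z = g x) else 0)"
    unfolding mass_def point_cover_def using assms
    by (intro sum.cong) (auto simp: in_subcube_map_Some)
  also have "\<dots> = of_bool (z = g x)"
    using assms finite_supports by (simp add: supports_def cube_def)
  finally show ?thesis .
qed

lemma qprt_feasible_point_cover: "0 \<le> e \<Longrightarrow> qprt_feasible n g e (point_cover n g)"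
  by (auto simp: qprt_feasible_iff mass_point_cover point_cover_def)

lemma one_le_qprt_cost:
  assumes "qprt_feasible n g e w"
  shows "1 \<le> qprt_cost n w"
proof -
  have "replicate n False \<in> cube n" by (simp add: cube_def)
  then have "1 = mass n (\<lambda>s. w False s + w True s) (replicate n False)"
    using assms by (simp add: qprt_feasible_iff mass_add)
  also have "\<dots> \<le> qprt_cost n w"
    using assms unfolding qprt_cost_eq qprt_feasible_iff
    by (intro mass_le_weighted_size add_nonneg_nonneg) simp_all
  finally show ?thesis .
qed

lemma qprt_le_cost: "qprt_feasible n g e w \<Longrightarrow> qprt n e g \<le> qprt_cost n w"
  unfolding qprt_def
  by (rule cInf_lower) (auto intro!: bdd_belowI[where m=1] dest: one_le_qprt_cost)

lemma le_qprt:
  assumes "0 \<le> e" and "\<And>w. qprt_feasible n g e w \<Longrightarrow> b \<le> qprt_cost n w"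
  shows "b \<le> qprt n e g"
  unfolding qprt_def
  using assms qprt_feasible_point_cover[OF assms(1)] by (intro cInf_greatest) auto

lemma one_le_qprt: "0 \<le> e \<Longrightarrow> 1 \<le> qprt n e g"
  by (rule le_qprt) (simp_all add: one_le_qprt_cost)

lemma qprt_amplification:
  assumes e: "0 < e" "e < 1/2" and err: "(4 * e * (1 - e)) ^ m \<le> d"
    and d: "0 \<le> d" and m: "0 < m"
  shows "qprt n d g \<le> qprt n e g ^ (2*m)"
proof -
  have "root (2*m) (qprt n d g) \<le> qprt n e g"
  proof (rule le_qprt)
    fix w assume w: "qprt_feasible n g e w"
    have "qprt n d g \<le> qprt_cost n (majority_vote n w m)"
      by (rule qprt_le_cost[OF majority_vote_feasible[OF w e err]])
    also have "\<dots> \<le> qprt_cost n w ^ (2*m)"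
      using w by (intro qprt_cost_majority_vote_le) (simp add: qprt_feasible_iff)
    finally have "root (2*m) (qprt n d g) \<le> root (2*m) (qprt_cost n w ^ (2*m))"
      using m by (intro real_root_le_mono) simp_all
    then show "root (2*m) (qprt n d g) \<le> qprt_cost n w"
      using m one_le_qprt_cost[OF w] by (simp add: real_root_power_cancel)
  qed (use e in simp)
  then have "root (2*m) (qprt n d g) ^ (2*m) \<le> qprt n e g ^ (2*m)"
    using one_le_qprt[OF d, of n g] by (intro power_mono real_root_ge_zero) simp_all
  then show ?thesis
    using m one_le_qprt[OF d, of n g] by (simp add: real_root_pow_pos2)
qed

lemma majority_rounds_exist:
  fixes d e :: real
  assumes d: "0 < d" "d \<le> 1/2" and e: "0 < e" "e < 1/2"
  obtains m :: nat where "0 < m" "(4 * e * (1 - e)) ^ m \<le> d"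
    "real (2*m) \<le> log 2 (1/d) / (1/2 - e)\<^sup>2"
proof -
  define c where "c = 1/2 - e"
  define L where "L = log 2 (1/d)"
  define m where "m = nat \<lceil>L / (4 * c\<^sup>2)\<rceil>"
  have c: "0 < c" "4 * c\<^sup>2 \<le> 1"
    using e power_le_one[of "1 - 2 * e" 2]
    by (simp_all add: c_def power2_eq_square algebra_simps)
  have L: "1 \<le> L" "ln (1/d) \<le> L"
  proof -
    have "log 2 2 \<le> L"
      unfolding L_def using d by (intro log_mono) (simp_all add: field_simps)
    then show "1 \<le> L" by simp
    have "ln (1/d) = L * ln 2" by (simp add: L_def log_def)
    also have "\<dots> \<le> L * 1"
      using \<open>1 \<le> L\<close> ln_le_minus_one[of 2] by (intro mult_left_mono) simp_all
    finally show "ln (1/d) \<le> L" by simp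
  qed
  have m: "L / (4 * c\<^sup>2) \<le> m" "real m < L / (4 * c\<^sup>2) + 1"
    using c L by (simp_all add: m_def) linarith
  have "(4 * e * (1 - e)) ^ m = (1 - 4 * c\<^sup>2) ^ m"
    by (simp add: c_def power2_eq_square algebra_simps)
  also have "\<dots> \<le> exp (- 4 * c\<^sup>2) ^ m"
    using c exp_ge_add_one_self[of "- 4 * c\<^sup>2"] by (intro power_mono) simp_all
  also have "\<dots> = exp (- (4 * c\<^sup>2 * m))"
    by (simp add: exp_of_nat_mult[symmetric] mult_ac)
  also have "\<dots> \<le> exp (- ln (1/d))"
    using m(1) L c by (simp add: field_simps)
  also have "\<dots> = d"
    using d by (simp add: ln_div)
  finally have "(4 * e * (1 - e)) ^ m \<le> d" .
  moreover have "real (2*m) \<le> L / c\<^sup>2"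
  proof -
    have "2 \<le> L / (2 * c\<^sup>2)"
      using c L by (simp add: field_simps)
    then show ?thesis
      using m(2) c by (simp add: field_simps)
  qed
  moreover have "0 < m"
  proof -
    have "0 < L / (4 * c\<^sup>2)" using c L by simp
    with m(1) show ?thesis by linarith
  qed
  ultimately show ?thesis
    using that by (simp add: L_def c_def)
qed

theorem mainTheorem8:
  shows "\<exists>C::real. \<forall>(n::nat) (g::bool list \<Rightarrow> bool) (\<delta>::real) (\<epsilon>::real).
    0 < \<delta> \<longrightarrow> \<delta> < \<epsilon> \<longrightarrow> \<epsilon> < 1/2 \<longrightarrow>
    log 2 (qprt n \<delta> g) \<le> C / (1/2 - \<epsilon>)^2 * log 2 (1/\<delta>) * log 2 (qprt n \<epsilon> g)"
proof (intro exI[of _ 1] allI impI)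
  fix n :: nat and g :: "bool list \<Rightarrow> bool" and \<delta> \<epsilon> :: real
  assume \<delta>: "0 < \<delta>" "\<delta> < \<epsilon>" and \<epsilon>: "\<epsilon> < 1/2"
  obtain m where m: "0 < m" "(4 * \<epsilon> * (1 - \<epsilon>)) ^ m \<le> \<delta>"
    "real (2*m) \<le> log 2 (1/\<delta>) / (1/2 - \<epsilon>)\<^sup>2"
    using majority_rounds_exist[of \<delta> \<epsilon>] \<delta> \<epsilon> by auto
  have q\<epsilon>: "1 \<le> qprt n \<epsilon> g" using \<delta> by (intro one_le_qprt) simp
  have "log 2 (qprt n \<delta> g) \<le> log 2 (qprt n \<epsilon> g ^ (2*m))"
    using qprt_amplification[of \<epsilon> m \<delta> n g] m \<delta> \<epsilon> one_le_qprt[of \<delta> n g]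
    by (intro log_mono) simp_all
  also have "\<dots> = real (2*m) * log 2 (qprt n \<epsilon> g)"
    using q\<epsilon> by (simp add: log_nat_power)
  also have "\<dots> \<le> log 2 (1/\<delta>) / (1/2 - \<epsilon>)\<^sup>2 * log 2 (qprt n \<epsilon> g)"
    using m q\<epsilon> by (intro mult_right_mono) simp_all
  finally show "log 2 (qprt n \<delta> g) \<le> 1 / (1/2 - \<epsilon>)^2 * log 2 (1/\<delta>) * log 2 (qprt n \<epsilon> g)"
    by simp
qed

end
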